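(* Let $Q$ be an admissible orientation of $\tilde A_n$ and $I,J$ indecomposable linearized semigroup ideals of $\Bbbk Q$ of type II such that $\Gamma_I\cup\Gamma_J=\Gamma$. Assume that, for each isolated vertex $\omega$ of $\Gamma_I\cap\Gamma_J$, the edge of $\Gamma_J$ adjacent to $\omega$ is a source of $Q$. Then $IJ$ decomposes into a direct sum of two non-zero ideals.
   Context: $\Bbbk$ is an algebraically closed field. An admissible orientation of $\tilde A_n$ is a finite quiver $Q$ with $n$ vertices whose underlying undirected graph is a cycle, having no oriented cycle and at least one source. Paths include trivial paths $\varepsilon_x$; products are concatenations when defined, $0$ otherwise. Maximal paths are paths not properly contained as subpaths of other paths. A linearized semigroup ideal is an ideal spanned by a set $X$ of paths with $\alpha\omega\beta\in X$ whenever $\omega\in X$ and $\alpha\omega\beta$ is defined. $\Gamma$: vertices the maximal paths, edges the sources and sinks of $Q$, edge $x$ joining the two maximal paths having $x$ as an endpoint. $\Gamma_I$: vertices the maximal paths in $I$, edges the sources/sinks $x$ with $\varepsilon_x\in I$. An indecomposable (non-zero, not a direct sum of two non-zero ideals) linearized semigroup ideal $I$ is of type II if $\Gamma_I$ is a chain (path graph) with at least two vertices which is not all of $\Gamma$. *)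

theory Defs
  imports "HOL-Computational_Algebra.Polynomial"
begin

text \<open>The quiver: vertices 0..n-1 arranged on a cycle; arrow i (for i < n) joins
  vertex i and vertex (i+1) mod n, oriented i -> (i+1) mod n iff ori i.
  Every finite quiver whose underlying graph is a cycle with n vertices is
  isomorphic to one of these.\<close>

definition asrc :: "nat \<Rightarrow> (nat \<Rightarrow> bool) \<Rightarrow> nat \<Rightarrow> nat" where
  "asrc n ori a = (if ori a then a else Suc a mod n)"

definition atgt :: "nat \<Rightarrow> (nat \<Rightarrow> bool) \<Rightarrow> nat \<Rightarrow> nat" where
  "atgt n ori a = (if ori a then Suc a mod n else a)"

type_synonym path = "nat \<times> nat list"

text \<open>A path is (start vertex, list of arrows in order of traversal);
  the trivial path at x is (x, []).\<close>

fun is_walk :: "(nat \<Rightarrow> nat) \<Rightarrow> (nat \<Rightarrow> nat) \<Rightarrow> nat \<Rightarrow> nat list \<Rightarrow> bool" where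
  "is_walk s t x [] = True"
| "is_walk s t x (a # as) = (s a = x \<and> is_walk s t (t a) as)"

fun wend :: "(nat \<Rightarrow> nat) \<Rightarrow> nat \<Rightarrow> nat list \<Rightarrow> nat" where
  "wend t x [] = x"
| "wend t x (a # as) = wend t (t a) as"

definition Paths :: "nat \<Rightarrow> (nat \<Rightarrow> bool) \<Rightarrow> path set" where
  "Paths n ori = {(x, as). x < n \<and> set as \<subseteq> {..<n} \<and> is_walk (asrc n ori) (atgt n ori) x as}"

definition pend :: "nat \<Rightarrow> (nat \<Rightarrow> bool) \<Rightarrow> path \<Rightarrow> nat" where
  "pend n ori p = wend (atgt n ori) (fst p) (snd p)"

text \<open>Product of paths (composition written right to left): p q means
  "first q, then p"; defined iff q ends where p starts.\<close>

definition pmul :: "nat \<Rightarrow> (nat \<Rightarrow> bool) \<Rightarrow> path \<Rightarrow> path \<Rightarrow> path option" where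
  "pmul n ori p q = (if pend n ori q = fst p then Some (fst q, snd q @ snd p) else None)"

definition is_source :: "nat \<Rightarrow> (nat \<Rightarrow> bool) \<Rightarrow> nat \<Rightarrow> bool" where
  "is_source n ori x \<longleftrightarrow> x < n \<and> (\<forall>a<n. atgt n ori a \<noteq> x)"

definition is_sink :: "nat \<Rightarrow> (nat \<Rightarrow> bool) \<Rightarrow> nat \<Rightarrow> bool" where
  "is_sink n ori x \<longleftrightarrow> x < n \<and> (\<forall>a<n. asrc n ori a \<noteq> x)"

definition admissible :: "nat \<Rightarrow> (nat \<Rightarrow> bool) \<Rightarrow> bool" where
  "admissible n ori \<longleftrightarrow>
     \<not> (\<exists>p \<in> Paths n ori. snd p \<noteq> [] \<and> pend n ori p = fst p) \<and> (\<exists>x. is_source n ori x)"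

definition kQ :: "nat \<Rightarrow> (nat \<Rightarrow> bool) \<Rightarrow> (path \<Rightarrow> 'k::field) set" where
  "kQ n ori = {f. finite {p. f p \<noteq> 0} \<and> {p. f p \<noteq> 0} \<subseteq> Paths n ori}"

definition conv :: "nat \<Rightarrow> (nat \<Rightarrow> bool) \<Rightarrow> (path \<Rightarrow> 'k::field) \<Rightarrow> (path \<Rightarrow> 'k) \<Rightarrow> path \<Rightarrow> 'k" where
  "conv n ori f g r =
     (\<Sum>(p, q) \<in> {(p, q). p \<in> Paths n ori \<and> q \<in> Paths n ori \<and> pmul n ori p q = Some r}. f p * g q)"

definition is_ideal :: "nat \<Rightarrow> (nat \<Rightarrow> bool) \<Rightarrow> (path \<Rightarrow> 'k::field) set \<Rightarrow> bool" where
  "is_ideal n ori A \<longleftrightarrow> A \<subseteq> kQ n ori \<and> (\<lambda>_. 0) \<in> A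
     \<and> (\<forall>f\<in>A. \<forall>g\<in>A. (\<lambda>r. f r + g r) \<in> A)
     \<and> (\<forall>c f. f \<in> A \<longrightarrow> (\<lambda>r. c * f r) \<in> A)
     \<and> (\<forall>f\<in>A. \<forall>g\<in>kQ n ori. conv n ori g f \<in> A \<and> conv n ori f g \<in> A)"

definition delta :: "path \<Rightarrow> path \<Rightarrow> 'k::field" where
  "delta p = (\<lambda>r. if r = p then 1 else 0)"

text \<open>The span of {delta p | p \<in> X} is the set of
  finitely supported functions supported in X.\<close>

definition lin_semigroup_ideal :: "nat \<Rightarrow> (nat \<Rightarrow> bool) \<Rightarrow> (path \<Rightarrow> 'k::field) set \<Rightarrow> bool" where
  "lin_semigroup_ideal n ori I \<longleftrightarrow> (\<exists>X \<subseteq> Paths n ori.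
     (\<forall>\<omega>\<in>X. \<forall>\<alpha>\<in>Paths n ori. \<forall>\<beta>\<in>Paths n ori. \<forall>r s.
         pmul n ori \<omega> \<beta> = Some r \<and> pmul n ori \<alpha> r = Some s \<longrightarrow> s \<in> X)
     \<and> I = {f \<in> kQ n ori. \<forall>p. f p \<noteq> 0 \<longrightarrow> p \<in> X})"

definition ideal_prod :: "nat \<Rightarrow> (nat \<Rightarrow> bool) \<Rightarrow> (path \<Rightarrow> 'k::field) set \<Rightarrow> (path \<Rightarrow> 'k) set \<Rightarrow> (path \<Rightarrow> 'k) set" where
  "ideal_prod n ori I J = \<Inter> {K. is_ideal n ori K \<and> (\<forall>f\<in>I. \<forall>g\<in>J. conv n ori f g \<in> K)}"

definition decomposable :: "nat \<Rightarrow> (nat \<Rightarrow> bool) \<Rightarrow> (path \<Rightarrow> 'k::field) set \<Rightarrow> bool" where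
  "decomposable n ori I \<longleftrightarrow> (\<exists>A B. is_ideal n ori A \<and> is_ideal n ori B
     \<and> A \<noteq> {\<lambda>_. 0} \<and> B \<noteq> {\<lambda>_. 0} \<and> A \<inter> B = {\<lambda>_. 0}
     \<and> I = {\<lambda>r. a r + b r | a b. a \<in> A \<and> b \<in> B})"

definition indecomposable :: "nat \<Rightarrow> (nat \<Rightarrow> bool) \<Rightarrow> (path \<Rightarrow> 'k::field) set \<Rightarrow> bool" where
  "indecomposable n ori I \<longleftrightarrow> is_ideal n ori I \<and> I \<noteq> {\<lambda>_. 0} \<and> \<not> decomposable n ori I"

definition subpath :: "nat \<Rightarrow> (nat \<Rightarrow> bool) \<Rightarrow> path \<Rightarrow> path \<Rightarrow> bool" where
  "subpath n ori p q \<longleftrightarrow> (\<exists>\<alpha>\<in>Paths n ori. \<exists>\<beta>\<in>Paths n ori. \<exists>r.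
      pmul n ori p \<beta> = Some r \<and> pmul n ori \<alpha> r = Some q)"

definition maximal_path :: "nat \<Rightarrow> (nat \<Rightarrow> bool) \<Rightarrow> path \<Rightarrow> bool" where
  "maximal_path n ori p \<longleftrightarrow> p \<in> Paths n ori \<and> (\<forall>q\<in>Paths n ori. subpath n ori p q \<longrightarrow> q = p)"

text \<open>Vertices of \<Gamma>: maximal paths. Edges of \<Gamma>: sources and sinks; edge x joins
  the maximal paths having x as an endpoint.\<close>

definition GammaV :: "nat \<Rightarrow> (nat \<Rightarrow> bool) \<Rightarrow> path set" where
  "GammaV n ori = {\<mu>. maximal_path n ori \<mu>}"

definition GammaE :: "nat \<Rightarrow> (nat \<Rightarrow> bool) \<Rightarrow> nat set" where
  "GammaE n ori = {x. is_source n ori x \<or> is_sink n ori x}"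

definition ends :: "nat \<Rightarrow> (nat \<Rightarrow> bool) \<Rightarrow> nat \<Rightarrow> path set" where
  "ends n ori x = {\<mu>. maximal_path n ori \<mu> \<and> (fst \<mu> = x \<or> pend n ori \<mu> = x)}"

definition GammaIV :: "nat \<Rightarrow> (nat \<Rightarrow> bool) \<Rightarrow> (path \<Rightarrow> 'k::field) set \<Rightarrow> path set" where
  "GammaIV n ori I = {\<mu>. maximal_path n ori \<mu> \<and> delta \<mu> \<in> I}"

definition GammaIE :: "nat \<Rightarrow> (nat \<Rightarrow> bool) \<Rightarrow> (path \<Rightarrow> 'k::field) set \<Rightarrow> nat set" where
  "GammaIE n ori I = {x. (is_source n ori x \<or> is_sink n ori x) \<and> delta (x, []) \<in> I}"

definition is_chain :: "'v set \<Rightarrow> 'e set \<Rightarrow> ('e \<Rightarrow> 'v set) \<Rightarrow> bool" where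
  "is_chain V E en \<longleftrightarrow> (\<exists>vs es. distinct vs \<and> distinct es \<and> set vs = V \<and> set es = E
     \<and> length vs = Suc (length es) \<and> (\<forall>i<length es. en (es ! i) = {vs ! i, vs ! Suc i}))"

definition type_II :: "nat \<Rightarrow> (nat \<Rightarrow> bool) \<Rightarrow> (path \<Rightarrow> 'k::field) set \<Rightarrow> bool" where
  "type_II n ori I \<longleftrightarrow> is_chain (GammaIV n ori I) (GammaIE n ori I) (ends n ori)
     \<and> 2 \<le> card (GammaIV n ori I)
     \<and> (GammaIV n ori I \<noteq> GammaV n ori \<or> GammaIE n ori I \<noteq> GammaE n ori)"

end

theory Submission
  imports Defs
begin

text \<open>
  A linearized semigroup ideal is the span of a set of paths closed under passing to
  superpaths, and the product IJ is the span of the set XP of products of a path of I with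
  a path of J, again closed under superpaths. Such a span decomposes as soon as XP splits
  into two non-empty superpath-closed parts.

  Two distinct maximal paths share a subpath only if it is the trivial path at a common
  endpoint, which is a source or sink, i.e. an edge of \<Gamma>. Since \<Gamma> is a cycle,
  |V(\<Gamma>)| \<le> |E(\<Gamma>)|; as \<Gamma>_I and \<Gamma>_J are chains covering \<Gamma>, inclusion-exclusion gives
  |V(\<Gamma>_I) \<inter> V(\<Gamma>_J)| \<ge> |E(\<Gamma>_I) \<inter> E(\<Gamma>_J)| + 2. Hence along the chain \<Gamma>_I there is an
  edge outside \<Gamma>_J lying between two common vertices; cutting \<Gamma>_I there, the paths of XP
  below the maximal paths on one side form one part. The common vertices lie in XP: a
  maximal path \<omega> of I and J is \<omega> times the trivial path at an endpoint lying in both ideals,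
  and the hypothesis on isolated vertices provides that endpoint as the start of \<omega>.
\<close>

section \<open>Walks on the cycle\<close>

lemma wend_append: "wend t x (as @ bs) = wend t (wend t x as) bs"
  by (induction as arbitrary: x) auto

lemma is_walk_append:
  "is_walk s t x (as @ bs) \<longleftrightarrow> is_walk s t x as \<and> is_walk s t (wend t x as) bs"
  by (induction as arbitrary: x) auto

lemma wend_last: "as \<noteq> [] \<Longrightarrow> wend t x as = t (last as)"
  by (induction as arbitrary: x) auto

lemma is_walk_same_start:
  "is_walk s t x as \<Longrightarrow> is_walk s t y as \<Longrightarrow> wend t x as = wend t y as \<Longrightarrow> x = y"
  by (cases as) auto

lemma Suc_mod_inj: "b < n \<Longrightarrow> c < n \<Longrightarrow> Suc b mod n = Suc c mod n \<Longrightarrow> b = c"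
  by (auto simp: mod_if split: if_splits)

lemma asrc_less: "a < n \<Longrightarrow> asrc n ori a < n"
  by (auto simp: asrc_def)

lemma atgt_less: "a < n \<Longrightarrow> atgt n ori a < n"
  by (auto simp: atgt_def)

text \<open>Each vertex of the cycle has exactly two incident arrows.\<close>

lemma out_arrow_unique:
  "\<lbrakk>a < n; b < n; c < n; atgt n ori a = asrc n ori b; atgt n ori a = asrc n ori c\<rbrakk> \<Longrightarrow> b = c"
  by (auto simp: asrc_def atgt_def split: if_splits dest: Suc_mod_inj)

lemma in_arrow_unique:
  "\<lbrakk>a < n; b < n; c < n; asrc n ori a = atgt n ori b; asrc n ori a = atgt n ori c\<rbrakk> \<Longrightarrow> b = c"
  by (auto simp: asrc_def atgt_def split: if_splits dest: Suc_mod_inj)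

lemma ori_composable:
  "\<lbrakk>a < n; b < n; atgt n ori a = asrc n ori b\<rbrakk> \<Longrightarrow> ori b = ori a"
  by (auto simp: asrc_def atgt_def split: if_splits dest: Suc_mod_inj)

lemma ori_walk_const:
  "\<lbrakk>is_walk (asrc n ori) (atgt n ori) x as; set as \<subseteq> {..<n}; a \<in> set as\<rbrakk>
    \<Longrightarrow> ori a = ori (hd as)"
proof (induction as arbitrary: x)
  case (Cons b as)
  show ?case
  proof (cases "a = b")
    case False
    then have a: "a \<in> set as" and ne: "as \<noteq> []" using Cons.prems by auto
    have "ori a = ori (hd as)" using Cons.IH[of "atgt n ori b"] Cons.prems a by auto
    moreover have "ori (hd as) = ori b"
      using ori_composable[of b n "hd as" ori] Cons.prems ne by (cases as) auto
    ultimately show ?thesis by simp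
  qed simp
qed simp

lemma source_not_sink: "is_source n ori x \<Longrightarrow> \<not> is_sink n ori x"
  unfolding is_source_def is_sink_def by (metis asrc_def atgt_def)

lemma walks_from_atgt_prefix:
  "\<lbrakk>a < n; set w \<subseteq> {..<n}; set w' \<subseteq> {..<n};
    is_walk (asrc n ori) (atgt n ori) (atgt n ori a) w;
    is_walk (asrc n ori) (atgt n ori) (atgt n ori a) w'\<rbrakk>
    \<Longrightarrow> (\<exists>z. w' = w @ z) \<or> (\<exists>z. w = w' @ z)"
proof (induction w arbitrary: a w')
  case (Cons b w)
  show ?case
  proof (cases w')
    case (Cons c w'')
    have "atgt n ori a = asrc n ori b" "atgt n ori a = asrc n ori c" "b < n" "c < n"
      using Cons.prems \<open>w' = c # w''\<close> by auto
    then have "b = c" using out_arrow_unique Cons.prems(1) by blast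
    have "(\<exists>z. w'' = w @ z) \<or> (\<exists>z. w = w'' @ z)"
      by (rule Cons.IH[of b w'']) (use Cons.prems \<open>w' = c # w''\<close> \<open>b = c\<close> in auto)
    then show ?thesis using \<open>w' = c # w''\<close> \<open>b = c\<close> by auto
  qed simp
qed simp

lemma walks_into_asrc_suffix:
  "\<lbrakk>b < n; set u \<subseteq> {..<n}; set u' \<subseteq> {..<n};
    is_walk (asrc n ori) (atgt n ori) s u; is_walk (asrc n ori) (atgt n ori) s' u';
    wend (atgt n ori) s u = asrc n ori b; wend (atgt n ori) s' u' = asrc n ori b\<rbrakk>
    \<Longrightarrow> (\<exists>z. u' = z @ u) \<or> (\<exists>z. u = z @ u')"
proof (induction u arbitrary: b u' rule: rev_induct)
  case (snoc c v)
  show ?case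
  proof (cases u' rule: rev_exhaust)
    case (snoc v' c')
    have "asrc n ori b = atgt n ori c" "asrc n ori b = atgt n ori c'" "c < n" "c' < n"
      using snoc.prems \<open>u' = v' @ [c']\<close> by (auto simp: wend_append)
    then have "c = c'" using in_arrow_unique snoc.prems(1) by blast
    have "(\<exists>z. v' = z @ v) \<or> (\<exists>z. v = z @ v')"
      by (rule snoc.IH[of c v'])
        (use snoc.prems \<open>u' = v' @ [c']\<close> \<open>c = c'\<close> \<open>c < n\<close> in \<open>auto simp: is_walk_append wend_append\<close>)
    then show ?thesis using \<open>u' = v' @ [c']\<close> \<open>c = c'\<close> by auto
  qed simp
qed simp

section \<open>Paths and subpaths\<close>

lemma pmul_Some:
  "pmul n ori p q = Some r \<longleftrightarrow> pend n ori q = fst p \<and> r = (fst q, snd q @ snd p)"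
  by (auto simp: pmul_def)

lemma pend_trivial [simp]: "pend n ori (x, []) = x"
  by (simp add: pend_def)

lemma wend_less: "x < n \<Longrightarrow> set as \<subseteq> {..<n} \<Longrightarrow> wend (atgt n ori) x as < n"
  by (induction as arbitrary: x) (auto simp: atgt_less)

lemma pend_less: "p \<in> Paths n ori \<Longrightarrow> pend n ori p < n"
  by (cases p) (auto simp: Paths_def pend_def wend_less)

lemma fst_less: "p \<in> Paths n ori \<Longrightarrow> fst p < n"
  by (cases p) (auto simp: Paths_def)

lemma trivial_path_Paths: "x < n \<Longrightarrow> (x, []) \<in> Paths n ori"
  by (simp add: Paths_def)

lemma arrow_Paths: "a < n \<Longrightarrow> (asrc n ori a, [a]) \<in> Paths n ori"
  by (simp add: Paths_def asrc_less)

lemma Paths_concat: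
  "\<lbrakk>q \<in> Paths n ori; p \<in> Paths n ori; pend n ori q = fst p\<rbrakk> \<Longrightarrow>
    (fst q, snd q @ snd p) \<in> Paths n ori \<and> pend n ori (fst q, snd q @ snd p) = pend n ori p"
  by (cases p; cases q) (auto simp: Paths_def pend_def is_walk_append wend_append)

lemma subpath_iff:
  "subpath n ori p q \<longleftrightarrow> (\<exists>\<alpha>\<in>Paths n ori. \<exists>\<beta>\<in>Paths n ori.
     pend n ori \<beta> = fst p \<and> pend n ori p = fst \<alpha> \<and> q = (fst \<beta>, snd \<beta> @ snd p @ snd \<alpha>))"
  unfolding subpath_def pmul_def by (auto simp: pend_def wend_append)

lemma subpath_refl: "p \<in> Paths n ori \<Longrightarrow> subpath n ori p p"
  unfolding subpath_iff
  by (rule bexI[of _ "(pend n ori p, [])"], rule bexI[of _ "(fst p, [])"])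
    (use trivial_path_Paths[OF pend_less] trivial_path_Paths[OF fst_less] in auto)

lemma subpath_trans:
  assumes pq: "subpath n ori p q" and qr: "subpath n ori q r" and p: "p \<in> Paths n ori"
  shows "subpath n ori p r"
proof -
  obtain \<alpha> \<beta> where a: "\<alpha> \<in> Paths n ori" "\<beta> \<in> Paths n ori" "pend n ori \<beta> = fst p"
    "pend n ori p = fst \<alpha>" "q = (fst \<beta>, snd \<beta> @ snd p @ snd \<alpha>)"
    using pq unfolding subpath_iff by blast
  obtain \<alpha>' \<beta>' where b: "\<alpha>' \<in> Paths n ori" "\<beta>' \<in> Paths n ori" "pend n ori \<beta>' = fst q"
    "pend n ori q = fst \<alpha>'" "r = (fst \<beta>', snd \<beta>' @ snd q @ snd \<alpha>')"
    using qr unfolding subpath_iff by blast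
  have left: "(fst \<beta>', snd \<beta>' @ snd \<beta>) \<in> Paths n ori"
    "pend n ori (fst \<beta>', snd \<beta>' @ snd \<beta>) = pend n ori \<beta>"
    using Paths_concat[OF b(2) a(2)] b(3) a(5) by auto
  have "pend n ori q = pend n ori \<alpha>"
    using a(3-5) by (simp add: pend_def wend_append)
  then have right: "(fst \<alpha>, snd \<alpha> @ snd \<alpha>') \<in> Paths n ori"
    using Paths_concat[OF a(1) b(1)] b(4) by auto
  show ?thesis unfolding subpath_iff
    by (rule bexI[OF _ right], rule bexI[OF _ left(1)]) (use left(2) a b in auto)
qed

lemma subpath_length_eq:
  "subpath n ori p q \<Longrightarrow> length (snd q) \<le> length (snd p) \<Longrightarrow> q = p"
  unfolding subpath_iff by (cases p) (auto simp: pend_def)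

lemma pmul_subpath:
  assumes p: "p \<in> Paths n ori" and q: "q \<in> Paths n ori" and e: "pmul n ori p q = Some r"
  shows "subpath n ori p r" "subpath n ori q r" "r \<in> Paths n ori"
proof -
  have e': "pend n ori q = fst p" "r = (fst q, snd q @ snd p)"
    using e by (auto simp: pmul_Some)
  then show "r \<in> Paths n ori" using Paths_concat[OF q p] by simp
  show "subpath n ori p r" unfolding subpath_iff
    by (rule bexI[OF _ trivial_path_Paths[OF pend_less[OF p]]], rule bexI[OF _ q]) (use e' in auto)
  show "subpath n ori q r" unfolding subpath_iff
    by (rule bexI[OF _ p], rule bexI[OF _ trivial_path_Paths[OF fst_less[OF q]]])
      (use e' in \<open>auto simp: pend_def\<close>)
qed

lemma trivial_subpath_split:
  assumes "subpath n ori (x, []) \<mu>"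
  obtains u w where "snd \<mu> = u @ w" "wend (atgt n ori) (fst \<mu>) u = x"
  using assms unfolding subpath_iff by (auto simp: pend_def)

text \<open>A path with n arrows visits some vertex twice and so contains an oriented cycle.\<close>

lemma length_path_less:
  assumes adm: "admissible n ori" and p: "p \<in> Paths n ori"
  shows "length (snd p) < n"
proof (rule ccontr)
  obtain x as where pe: "p = (x, as)" by (cases p)
  assume "\<not> length (snd p) < n"
  then have long: "n \<le> length as" using pe by simp
  define v where "v i = wend (atgt n ori) x (take i as)" for i
  have x: "x < n" "set as \<subseteq> {..<n}" "is_walk (asrc n ori) (atgt n ori) x as"
    using p pe by (auto simp: Paths_def)
  have v_less: "v ` {..length as} \<subseteq> {..<n}"
    using x by (auto simp: v_def intro!: wend_less dest: in_set_takeD)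
  have "\<not> inj_on v {..length as}"
  proof
    assume "inj_on v {..length as}"
    then have "card (v ` {..length as}) = Suc (length as)" by (simp add: card_image)
    moreover have "card (v ` {..length as}) \<le> n" using card_mono[OF _ v_less] by simp
    ultimately show False using long by simp
  qed
  then obtain i j where ij: "i < j" "j \<le> length as" "v i = v j"
    unfolding inj_on_def by (metis atMost_iff linorder_neq_iff order.strict_trans2 less_imp_le)
  define c where "c = take (j - i) (drop i as)"
  have tj: "take j as = take i as @ c"
    using take_add[of i "j - i" as] ij by (simp add: c_def)
  have "is_walk (asrc n ori) (atgt n ori) x (take j as)"
    using x(3) is_walk_append[of _ _ x "take j as" "drop j as"] by simp
  then have "is_walk (asrc n ori) (atgt n ori) (v i) c"
    using tj by (simp add: is_walk_append v_def)
  moreover have "wend (atgt n ori) (v i) c = v i" "c \<noteq> []"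
    using ij tj by (simp_all add: v_def wend_append c_def)
  moreover have "v i < n" "set c \<subseteq> {..<n}"
    using v_less ij x(2) by (auto simp: c_def dest: in_set_takeD in_set_dropD)
  ultimately show False using adm unfolding admissible_def by (auto simp: Paths_def pend_def)
qed

section \<open>Maximal paths\<close>

lemma exists_maximal_superpath:
  assumes adm: "admissible n ori" and r: "r \<in> Paths n ori"
  obtains \<mu> where "maximal_path n ori \<mu>" "subpath n ori r \<mu>"
proof -
  define P where "P k = (\<exists>q\<in>Paths n ori. subpath n ori r q \<and> length (snd q) = k)" for k
  have "P (length (snd r))" unfolding P_def using r subpath_refl[OF r] by blast
  moreover have "\<forall>k. P k \<longrightarrow> k \<le> n"
  proof (intro allI impI)
    fix k assume "P k"
    then obtain q where "q \<in> Paths n ori" "length (snd q) = k" unfolding P_def by blast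
    then show "k \<le> n" using length_path_less[OF adm, of q] by simp
  qed
  ultimately obtain k where k: "P k" "\<forall>k'. P k' \<longrightarrow> k' \<le> k"
    using Nat.ex_has_greatest_nat[of P "length (snd r)" n] by blast
  then obtain q where q: "q \<in> Paths n ori" "subpath n ori r q" "length (snd q) = k"
    unfolding P_def by blast
  have "maximal_path n ori q" unfolding maximal_path_def
  proof (intro conjI ballI impI)
    fix q' assume "q' \<in> Paths n ori" "subpath n ori q q'"
    then have "P (length (snd q'))"
      unfolding P_def using subpath_trans[OF q(2) \<open>subpath n ori q q'\<close> r] by blast
    then have "length (snd q') \<le> length (snd q)" using k q by simp
    then show "q' = q" using subpath_length_eq[OF \<open>subpath n ori q q'\<close>] by simp
  qed (fact q(1))
  then show ?thesis using that q by blast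
qed

lemma maximal_path_Paths: "maximal_path n ori \<mu> \<Longrightarrow> \<mu> \<in> Paths n ori"
  by (simp add: maximal_path_def)

lemma maximal_path_no_proper_pmul:
  assumes m: "maximal_path n ori \<mu>" and q: "q \<in> Paths n ori"
  shows "pmul n ori \<mu> q = Some r \<Longrightarrow> snd q = []" and "pmul n ori q \<mu> = Some r \<Longrightarrow> snd q = []"
proof -
  have mu: "\<mu> \<in> Paths n ori" using m by (rule maximal_path_Paths)
  show "snd q = []" if "pmul n ori \<mu> q = Some r"
  proof -
    have "r = \<mu>" using m pmul_subpath[OF mu q that] unfolding maximal_path_def by blast
    moreover have "snd r = snd q @ snd \<mu>" using that by (simp add: pmul_Some)
    ultimately show ?thesis by simp
  qed
  show "snd q = []" if "pmul n ori q \<mu> = Some r"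
  proof -
    have "r = \<mu>" using m pmul_subpath[OF q mu that] unfolding maximal_path_def by blast
    moreover have "snd r = snd \<mu> @ snd q" using that by (simp add: pmul_Some)
    ultimately show ?thesis by simp
  qed
qed

lemma maximal_path_starts_at_source:
  assumes m: "maximal_path n ori \<mu>"
  shows "is_source n ori (fst \<mu>)"
  unfolding is_source_def
proof (intro conjI allI impI notI)
  show "fst \<mu> < n" using fst_less[OF maximal_path_Paths[OF m]] .
  fix c assume "c < n" "atgt n ori c = fst \<mu>"
  then have "pmul n ori \<mu> (asrc n ori c, [c]) \<noteq> None"
    by (simp add: pmul_def pend_def)
  then show False
    using maximal_path_no_proper_pmul(1)[OF m arrow_Paths[OF \<open>c < n\<close>]] by fastforce
qed

lemma maximal_path_ends_at_sink:
  assumes m: "maximal_path n ori \<mu>"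
  shows "is_sink n ori (pend n ori \<mu>)"
  unfolding is_sink_def
proof (intro conjI allI impI notI)
  show "pend n ori \<mu> < n" using pend_less[OF maximal_path_Paths[OF m]] .
  fix c assume "c < n" "asrc n ori c = pend n ori \<mu>"
  then have "pmul n ori (asrc n ori c, [c]) \<mu> \<noteq> None"
    by (simp add: pmul_def)
  then show False
    using maximal_path_no_proper_pmul(2)[OF m arrow_Paths[OF \<open>c < n\<close>]] by fastforce
qed

lemma maximal_path_nontrivial: "maximal_path n ori \<mu> \<Longrightarrow> snd \<mu> \<noteq> []"
  using maximal_path_starts_at_source maximal_path_ends_at_sink source_not_sink
  by (metis pend_def prod.collapse wend.simps(1))

lemma maximal_path_ends_GammaE:
  "maximal_path n ori \<mu> \<Longrightarrow> \<mu> \<in> ends n ori x \<Longrightarrow> x \<in> GammaE n ori"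
  using maximal_path_starts_at_source[of n ori \<mu>] maximal_path_ends_at_sink[of n ori \<mu>]
  by (auto simp: ends_def GammaE_def)

lemma maximal_path_walk:
  "maximal_path n ori \<mu> \<Longrightarrow>
    is_walk (asrc n ori) (atgt n ori) (fst \<mu>) (snd \<mu>) \<and> set (snd \<mu>) \<subseteq> {..<n}"
  by (cases \<mu>) (auto simp: maximal_path_def Paths_def)

lemma maximal_path_no_forward_extension:
  assumes m: "maximal_path n ori \<mu>" and sm: "snd \<mu> = u @ b # w" and z: "set z \<subseteq> {..<n}"
    and walk: "is_walk (asrc n ori) (atgt n ori) (atgt n ori b) (w @ z)"
  shows "z = []"
proof (rule ccontr)
  assume "z \<noteq> []"
  then have "asrc n ori (hd z) = pend n ori \<mu>" "hd z < n"
    using walk sm z by (cases z; auto simp: is_walk_append pend_def wend_append)+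
  then show False using maximal_path_ends_at_sink[OF m] unfolding is_sink_def by blast
qed

lemma maximal_path_no_backward_extension:
  assumes m: "maximal_path n ori \<mu>" and sm: "snd \<mu> = u @ b # w" and z: "set z \<subseteq> {..<n}"
    and walk: "is_walk (asrc n ori) (atgt n ori) y (z @ u)"
    and reach: "wend (atgt n ori) y (z @ u) = asrc n ori b"
  shows "z = []"
proof (rule ccontr)
  assume "z \<noteq> []"
  have "is_walk (asrc n ori) (atgt n ori) (fst \<mu>) u" "wend (atgt n ori) (fst \<mu>) u = asrc n ori b"
    using maximal_path_walk[OF m] sm by (auto simp: is_walk_append)
  then have "wend (atgt n ori) y z = fst \<mu>"
    using is_walk_same_start walk reach by (fastforce simp: is_walk_append wend_append)
  moreover have "last z < n" using \<open>z \<noteq> []\<close> z last_in_set by blast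
  ultimately have "atgt n ori (last z) = fst \<mu>" "last z < n"
    using \<open>z \<noteq> []\<close> by (auto simp: wend_last)
  then show False using maximal_path_starts_at_source[OF m] unfolding is_source_def by blast
qed

text \<open>A maximal path is the maximal extension of any one of its arrows in both directions,
  and these extensions are unique because walks through an arrow cannot branch.\<close>

lemma maximal_paths_sharing_arrow_eq:
  assumes m: "maximal_path n ori \<mu>" and m': "maximal_path n ori \<mu>'"
    and sm: "snd \<mu> = u @ b # w" and sm': "snd \<mu>' = u' @ b # w'"
  shows "\<mu> = \<mu>'"
proof -
  have P: "is_walk (asrc n ori) (atgt n ori) (fst \<mu>) (u @ b # w)" "set (u @ b # w) \<subseteq> {..<n}"
    using maximal_path_walk[OF m] sm by auto
  have P': "is_walk (asrc n ori) (atgt n ori) (fst \<mu>') (u' @ b # w')" "set (u' @ b # w') \<subseteq> {..<n}"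
    using maximal_path_walk[OF m'] sm' by auto
  have b: "b < n" and sets: "set u \<subseteq> {..<n}" "set w \<subseteq> {..<n}" "set u' \<subseteq> {..<n}" "set w' \<subseteq> {..<n}"
    using P(2) P'(2) by auto
  have walks: "is_walk (asrc n ori) (atgt n ori) (fst \<mu>) u" "wend (atgt n ori) (fst \<mu>) u = asrc n ori b"
    "is_walk (asrc n ori) (atgt n ori) (atgt n ori b) w"
    using P(1) by (auto simp: is_walk_append)
  have walks': "is_walk (asrc n ori) (atgt n ori) (fst \<mu>') u'" "wend (atgt n ori) (fst \<mu>') u' = asrc n ori b"
    "is_walk (asrc n ori) (atgt n ori) (atgt n ori b) w'"
    using P'(1) by (auto simp: is_walk_append)
  have "w = w'"
    using walks_from_atgt_prefix[OF b sets(2,4) walks(3) walks'(3)]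
  proof (elim disjE exE)
    fix z assume "w' = w @ z"
    then show ?thesis using maximal_path_no_forward_extension[OF m sm, of z] sets(4) walks'(3) by simp
  next
    fix z assume "w = w' @ z"
    then show ?thesis using maximal_path_no_forward_extension[OF m' sm', of z] sets(2) walks(3) by simp
  qed
  moreover have "u = u'"
    using walks_into_asrc_suffix[OF b sets(1,3) walks(1) walks'(1) walks(2) walks'(2)]
  proof (elim disjE exE)
    fix z assume "u' = z @ u"
    then show ?thesis
      using maximal_path_no_backward_extension[OF m sm, of z "fst \<mu>'"] sets(3) walks'(1,2) by simp
  next
    fix z assume "u = z @ u'"
    then show ?thesis
      using maximal_path_no_backward_extension[OF m' sm', of z "fst \<mu>"] sets(1) walks(1,2) by simp
  qed
  moreover have "fst \<mu> = fst \<mu>'"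
    using is_walk_same_start[of "asrc n ori" "atgt n ori" "fst \<mu>" u "fst \<mu>'"] walks walks' \<open>u = u'\<close>
    by simp
  ultimately show ?thesis using sm sm' by (simp add: prod_eq_iff)
qed

lemma trivial_subpath_of_maximal_path:
  assumes m: "maximal_path n ori \<mu>" and sub: "subpath n ori (x, []) \<mu>"
  shows "is_source n ori x \<Longrightarrow> fst \<mu> = x"
    and "is_sink n ori x \<Longrightarrow> pend n ori \<mu> = x"
    and "\<not> is_source n ori x \<Longrightarrow> \<exists>u a w. snd \<mu> = u @ a # w \<and> a < n \<and> atgt n ori a = x"
proof -
  obtain u w where uw: "snd \<mu> = u @ w" "wend (atgt n ori) (fst \<mu>) u = x"
    using sub by (rule trivial_subpath_split)
  have walk: "is_walk (asrc n ori) (atgt n ori) x w" "set u \<subseteq> {..<n}" "set w \<subseteq> {..<n}"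
    using maximal_path_walk[OF m] uw by (auto simp: is_walk_append)
  have pend: "pend n ori \<mu> = wend (atgt n ori) x w"
    using uw by (simp add: pend_def wend_append)
  have into_x: "u \<noteq> [] \<Longrightarrow> atgt n ori (last u) = x \<and> last u < n"
    using uw(2) walk(2) last_in_set[of u] by (auto simp: wend_last subset_iff)
  show "is_source n ori x \<Longrightarrow> fst \<mu> = x"
    using into_x uw(2) unfolding is_source_def by (cases "u = []") auto
  show "is_sink n ori x \<Longrightarrow> pend n ori \<mu> = x"
    using walk pend unfolding is_sink_def by (cases w) auto
  show "\<exists>u a w. snd \<mu> = u @ a # w \<and> a < n \<and> atgt n ori a = x" if "\<not> is_source n ori x"
  proof -
    have "u \<noteq> []" using that uw(2) maximal_path_starts_at_source[OF m] by auto
    then show ?thesis using into_x uw(1) by (metis append_butlast_last_id append.assoc append_Cons append_Nil)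
  qed
qed

lemma common_subpath_of_maximal_paths:
  assumes m: "maximal_path n ori \<mu>" and m': "maximal_path n ori \<mu>'" and ne: "\<mu> \<noteq> \<mu>'"
    and sub: "subpath n ori r \<mu>" and sub': "subpath n ori r \<mu>'"
  shows "r = (fst r, [])" "\<mu> \<in> ends n ori (fst r)" "\<mu>' \<in> ends n ori (fst r)"
proof -
  show trivial: "r = (fst r, [])"
  proof (rule ccontr)
    assume "r \<noteq> (fst r, [])"
    then obtain b rest where br: "snd r = b # rest" by (cases r; cases "snd r") auto
    have arrow_b: "\<exists>u w. snd \<nu> = u @ b # w" if sub_\<nu>: "subpath n ori r \<nu>" for \<nu>
    proof -
      obtain \<alpha> \<beta> :: path where "\<nu> = (fst \<beta>, snd \<beta> @ snd r @ snd \<alpha>)"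
        using sub_\<nu> unfolding subpath_iff by blast
      then show ?thesis using br by (intro exI[of _ "snd \<beta>"] exI[of _ "rest @ snd \<alpha>"]) simp
    qed
    obtain u w u' w' where "snd \<mu> = u @ b # w" "snd \<mu>' = u' @ b # w'"
      using arrow_b[OF sub] arrow_b[OF sub'] by blast
    then show False using maximal_paths_sharing_arrow_eq[OF m m'] ne by blast
  qed
  obtain x where rx: "r = (x, [])" using trivial by blast
  have sub_x: "subpath n ori (x, []) \<mu>" and sub'_x: "subpath n ori (x, []) \<mu>'"
    using sub sub' rx by simp_all
  have "is_source n ori x \<or> is_sink n ori x"
  proof (rule ccontr)
    assume neither: "\<not> (is_source n ori x \<or> is_sink n ori x)"
    obtain u a w where a: "snd \<mu> = u @ a # w" "a < n" "atgt n ori a = x"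
      using trivial_subpath_of_maximal_path(3)[OF m sub_x] neither by blast
    obtain u' a' w' where a': "snd \<mu>' = u' @ a' # w'" "a' < n" "atgt n ori a' = x"
      using trivial_subpath_of_maximal_path(3)[OF m' sub'_x] neither by blast
    obtain c where "c < n" "asrc n ori c = x"
      using neither a(3) atgt_less[OF a(2)] unfolding is_sink_def by blast
    then have "a = a'" using in_arrow_unique[of c n a a' ori] a a' by simp
    then show False using maximal_paths_sharing_arrow_eq[OF m m' a(1)] a'(1) ne by blast
  qed
  then show "\<mu> \<in> ends n ori (fst r)" "\<mu>' \<in> ends n ori (fst r)"
    using trivial_subpath_of_maximal_path(1,2)[OF m sub_x] trivial_subpath_of_maximal_path(1,2)[OF m' sub'_x] m m'
    unfolding ends_def rx by auto
qed

lemma maximal_path_first_arrow: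
  "maximal_path n ori \<mu> \<Longrightarrow> ori (hd (snd \<mu>)) \<Longrightarrow> fst \<mu> = hd (snd \<mu>)"
  using maximal_path_nontrivial[of n ori \<mu>] maximal_path_walk[of n ori \<mu>]
  by (cases "snd \<mu>") (auto simp: asrc_def)

lemma maximal_path_last_arrow:
  assumes m: "maximal_path n ori \<mu>" and "\<not> ori (hd (snd \<mu>))"
  shows "pend n ori \<mu> = last (snd \<mu>)"
proof -
  have "snd \<mu> \<noteq> []" using maximal_path_nontrivial[OF m] .
  moreover have "\<not> ori (last (snd \<mu>))"
    using ori_walk_const[of n ori "fst \<mu>" "snd \<mu>" "last (snd \<mu>)"] maximal_path_walk[OF m] assms(2) calculation
    by simp
  ultimately show ?thesis by (simp add: pend_def wend_last atgt_def)
qed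

text \<open>Send a maximal path to its start if its arrows point forward and to its end otherwise:
  the arrow at that end lies on no other maximal path, so this map is injective.\<close>

lemma card_GammaV_le_card_GammaE:
  assumes fin: "finite (GammaE n ori)"
  shows "card (GammaV n ori) \<le> card (GammaE n ori)"
proof -
  define \<phi> where "\<phi> \<mu> = (if ori (hd (snd \<mu>)) then fst \<mu> else pend n ori \<mu>)" for \<mu>
  have "\<phi> ` GammaV n ori \<subseteq> GammaE n ori"
    using maximal_path_starts_at_source maximal_path_ends_at_sink
    by (auto simp: \<phi>_def GammaV_def GammaE_def)
  moreover have "inj_on \<phi> (GammaV n ori)"
  proof (rule inj_onI)
    fix \<mu> \<mu>' assume "\<mu> \<in> GammaV n ori" "\<mu>' \<in> GammaV n ori" and eq: "\<phi> \<mu> = \<phi> \<mu>'"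
    then have m: "maximal_path n ori \<mu>" and m': "maximal_path n ori \<mu>'"
      by (auto simp: GammaV_def)
    have ne: "snd \<mu> \<noteq> []" "snd \<mu>' \<noteq> []"
      using maximal_path_nontrivial[OF m] maximal_path_nontrivial[OF m'] by simp_all
    have share_first: "\<mu> = \<mu>'" if "hd (snd \<mu>) = hd (snd \<mu>')"
    proof (rule maximal_paths_sharing_arrow_eq[OF m m'])
      show "snd \<mu> = [] @ hd (snd \<mu>) # tl (snd \<mu>)" using ne(1) by simp
      show "snd \<mu>' = [] @ hd (snd \<mu>) # tl (snd \<mu>')" using ne(2) that by simp
    qed
    have share_last: "\<mu> = \<mu>'" if "last (snd \<mu>) = last (snd \<mu>')"
    proof (rule maximal_paths_sharing_arrow_eq[OF m m'])
      show "snd \<mu> = butlast (snd \<mu>) @ last (snd \<mu>) # []" using ne(1) by simp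
      show "snd \<mu>' = butlast (snd \<mu>') @ last (snd \<mu>) # []" using ne(2) that by simp
    qed
    consider "ori (hd (snd \<mu>))" "ori (hd (snd \<mu>'))" | "\<not> ori (hd (snd \<mu>))" "\<not> ori (hd (snd \<mu>'))"
      | "fst \<mu> = pend n ori \<mu>' \<or> fst \<mu>' = pend n ori \<mu>"
      using eq by (auto simp: \<phi>_def split: if_splits)
    then show "\<mu> = \<mu>'"
    proof cases
      case 1
      then show ?thesis
        using eq share_first maximal_path_first_arrow[OF m] maximal_path_first_arrow[OF m']
        by (simp add: \<phi>_def)
    next
      case 2
      then show ?thesis
        using eq share_last maximal_path_last_arrow[OF m] maximal_path_last_arrow[OF m']
        by (simp add: \<phi>_def)
    next
      case 3
      then show ?thesis
        using maximal_path_starts_at_source[OF m] maximal_path_starts_at_source[OF m']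
          maximal_path_ends_at_sink[OF m] maximal_path_ends_at_sink[OF m'] source_not_sink
        by metis
    qed
  qed
  ultimately show ?thesis using card_inj_on_le[OF _ _ fin] by blast
qed

section \<open>Spans of superpath-closed sets of paths\<close>

definition path_span :: "nat \<Rightarrow> (nat \<Rightarrow> bool) \<Rightarrow> path set \<Rightarrow> (path \<Rightarrow> 'k::field) set" where
  "path_span n ori Y = {f \<in> kQ n ori. \<forall>p. f p \<noteq> 0 \<longrightarrow> p \<in> Y}"

definition upward_closed :: "nat \<Rightarrow> (nat \<Rightarrow> bool) \<Rightarrow> path set \<Rightarrow> bool" where
  "upward_closed n ori Y \<longleftrightarrow> (\<forall>\<omega>\<in>Y. \<forall>s. subpath n ori \<omega> s \<longrightarrow> s \<in> Y)"

definition path_prod :: "nat \<Rightarrow> (nat \<Rightarrow> bool) \<Rightarrow> path set \<Rightarrow> path set \<Rightarrow> path set" where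
  "path_prod n ori X Y = {r. \<exists>p\<in>X. \<exists>q\<in>Y. pmul n ori p q = Some r}"

lemma lin_semigroup_ideal_path_span:
  assumes "lin_semigroup_ideal n ori I"
  obtains X where "X \<subseteq> Paths n ori" "upward_closed n ori X" "I = path_span n ori X"
proof -
  from assms obtain X where X: "X \<subseteq> Paths n ori"
    "\<forall>\<omega>\<in>X. \<forall>\<alpha>\<in>Paths n ori. \<forall>\<beta>\<in>Paths n ori. \<forall>r s.
       pmul n ori \<omega> \<beta> = Some r \<and> pmul n ori \<alpha> r = Some s \<longrightarrow> s \<in> X"
    "I = {f \<in> kQ n ori. \<forall>p. f p \<noteq> 0 \<longrightarrow> p \<in> X}"
    unfolding lin_semigroup_ideal_def by blast
  have "upward_closed n ori X" unfolding upward_closed_def subpath_def using X(2) by blast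
  then show ?thesis using that X by (simp add: path_span_def)
qed

lemma finite_factorizations:
  "finite {(p, q). p \<in> Paths n ori \<and> q \<in> Paths n ori \<and> pmul n ori p q = Some r}"
proof -
  define g where "g i = ((wend (atgt n ori) (fst r) (take i (snd r)), drop i (snd r)),
      (fst r, take i (snd r)))" for i
  have "{(p, q). p \<in> Paths n ori \<and> q \<in> Paths n ori \<and> pmul n ori p q = Some r}
      \<subseteq> g ` {..length (snd r)}"
  proof (clarify)
    fix p q assume "pmul n ori p q = Some r"
    then have e: "pend n ori q = fst p" "r = (fst q, snd q @ snd p)" by (auto simp: pmul_Some)
    then have "(p, q) = g (length (snd q))" by (cases p; cases q) (auto simp: g_def pend_def)
    then show "(p, q) \<in> g ` {..length (snd r)}" using e by auto
  qed
  then show ?thesis using finite_subset by blast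
qed

lemma conv_nonzero:
  assumes "conv n ori f g r \<noteq> 0"
  obtains p q where "p \<in> Paths n ori" "q \<in> Paths n ori" "pmul n ori p q = Some r"
    "f p \<noteq> 0" "g q \<noteq> 0"
proof -
  from assms obtain x where
    "x \<in> {(p, q). p \<in> Paths n ori \<and> q \<in> Paths n ori \<and> pmul n ori p q = Some r}"
    "(case x of (p, q) \<Rightarrow> f p * g q) \<noteq> 0"
    unfolding conv_def by (rule sum.not_neutral_contains_not_neutral)
  then show ?thesis using that by (cases x) auto
qed

lemma conv_kQ:
  assumes f: "f \<in> kQ n ori" and g: "g \<in> kQ n ori"
  shows "conv n ori f g \<in> kQ n ori"
proof -
  let ?F = "{p. f p \<noteq> 0}" and ?G = "{q. g q \<noteq> 0}"
  have fin: "finite ?F" "finite ?G" using f g by (auto simp: kQ_def)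
  have "r \<in> (\<lambda>(p, q). (fst q, snd q @ snd p)) ` (?F \<times> ?G) \<and> r \<in> Paths n ori"
    if nz: "conv n ori f g r \<noteq> 0" for r
  proof -
    obtain p q where pq: "p \<in> Paths n ori" "q \<in> Paths n ori" "pmul n ori p q = Some r"
      "f p \<noteq> 0" "g q \<noteq> 0"
      using nz by (rule conv_nonzero)
    then show ?thesis using pmul_subpath(3)[OF pq(1-3)] by (force simp: pmul_Some)
  qed
  then have "{r. conv n ori f g r \<noteq> 0} \<subseteq> (\<lambda>(p, q). (fst q, snd q @ snd p)) ` (?F \<times> ?G)"
    "{r. conv n ori f g r \<noteq> 0} \<subseteq> Paths n ori"
    by blast+
  then show ?thesis
    using finite_subset[OF _ finite_imageI[OF finite_cartesian_product[OF fin]]]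
    by (simp add: kQ_def)
qed

lemma conv_delta:
  assumes p: "p \<in> Paths n ori" and q: "q \<in> Paths n ori" and e: "pmul n ori p q = Some r0"
  shows "conv n ori (delta p) (delta q) = (delta r0 :: path \<Rightarrow> 'k::field)"
proof
  fix r
  let ?S = "{(p, q). p \<in> Paths n ori \<and> q \<in> Paths n ori \<and> pmul n ori p q = Some r}"
  have "conv n ori (delta p) (delta q) r = (\<Sum>x\<in>?S. if x = (p, q) then (1::'k) else 0)"
    unfolding conv_def by (rule sum.cong) (auto simp: delta_def split: if_splits)
  also have "\<dots> = (if (p, q) \<in> ?S then 1 else 0)"
    using sum.delta[OF finite_factorizations, of "(p, q)" "\<lambda>_. 1::'k"] by simp
  also have "\<dots> = delta r0 r" using p q e by (auto simp: delta_def)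
  finally show "conv n ori (delta p) (delta q) r = (delta r0 r :: 'k)" .
qed

lemma delta_in_path_span:
  assumes "p \<in> Paths n ori"
  shows "(delta p :: path \<Rightarrow> 'k::field) \<in> path_span n ori Y \<longleftrightarrow> p \<in> Y"
proof
  assume "(delta p :: path \<Rightarrow> 'k) \<in> path_span n ori Y"
  moreover have "(delta p p :: 'k) \<noteq> 0" by (simp add: delta_def)
  ultimately show "p \<in> Y" unfolding path_span_def by blast
next
  assume "p \<in> Y"
  then show "(delta p :: path \<Rightarrow> 'k) \<in> path_span n ori Y"
    using assms by (simp add: path_span_def kQ_def delta_def)
qed

lemma path_span_is_ideal:
  assumes up: "upward_closed n ori Y"
  shows "is_ideal n ori (path_span n ori Y :: (path \<Rightarrow> 'k::field) set)"
  unfolding is_ideal_def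
proof (intro conjI allI impI ballI)
  fix f g :: "path \<Rightarrow> 'k" assume f: "f \<in> path_span n ori Y"
  have "{r. f r + g r \<noteq> 0} \<subseteq> {r. f r \<noteq> 0} \<union> {r. g r \<noteq> 0}" by auto
  then show "g \<in> path_span n ori Y \<Longrightarrow> (\<lambda>r. f r + g r) \<in> path_span n ori Y"
    using f by (auto simp: path_span_def kQ_def intro: finite_subset)
  have f_kQ: "f \<in> kQ n ori" using f by (simp add: path_span_def)
  show "conv n ori g f \<in> path_span n ori Y" if g: "g \<in> kQ n ori"
  proof -
    have "r \<in> Y" if nz: "conv n ori g f r \<noteq> 0" for r
    proof -
      obtain p q where pq: "p \<in> Paths n ori" "q \<in> Paths n ori" "pmul n ori p q = Some r" "f q \<noteq> 0"
        using nz by (rule conv_nonzero)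
      then show ?thesis
        using f up pmul_subpath(2)[OF pq(1-3)] unfolding path_span_def upward_closed_def by blast
    qed
    then show ?thesis using conv_kQ[OF g f_kQ] by (auto simp: path_span_def)
  qed
  show "conv n ori f g \<in> path_span n ori Y" if g: "g \<in> kQ n ori"
  proof -
    have "r \<in> Y" if nz: "conv n ori f g r \<noteq> 0" for r
    proof -
      obtain p q where pq: "p \<in> Paths n ori" "q \<in> Paths n ori" "pmul n ori p q = Some r" "f p \<noteq> 0"
        using nz by (rule conv_nonzero)
      then show ?thesis
        using f up pmul_subpath(1)[OF pq(1-3)] unfolding path_span_def upward_closed_def by blast
    qed
    then show ?thesis using conv_kQ[OF f_kQ g] by (auto simp: path_span_def)
  qed
next
  fix c :: 'k and f :: "path \<Rightarrow> 'k" assume "f \<in> path_span n ori Y"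
  then show "(\<lambda>r. c * f r) \<in> path_span n ori Y"
    by (auto simp: path_span_def kQ_def elim: rev_finite_subset)
qed (auto simp: path_span_def kQ_def)

lemma path_span_subset_ideal:
  assumes K: "is_ideal n ori K" and delta: "\<forall>r\<in>Y. delta r \<in> K"
  shows "path_span n ori Y \<subseteq> (K :: (path \<Rightarrow> 'k::field) set)"
proof
  fix f :: "path \<Rightarrow> 'k" assume f: "f \<in> path_span n ori Y"
  have support: "finite F \<Longrightarrow> F \<subseteq> Y \<Longrightarrow> {p. g p \<noteq> 0} \<subseteq> F \<Longrightarrow> g \<in> K"
    for F and g :: "path \<Rightarrow> 'k"
  proof (induction F arbitrary: g rule: finite_induct)
    case empty
    then have "g = (\<lambda>_. 0)" by auto
    then show ?case using K by (simp add: is_ideal_def)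
  next
    case (insert a F)
    define g' where "g' x = (if x = a then 0 else g x)" for x
    have "g' \<in> K" using insert by (intro insert.IH) (auto simp: g'_def)
    moreover have "(\<lambda>r. g a * delta a r) \<in> K" using K delta insert.prems by (auto simp: is_ideal_def)
    ultimately have "(\<lambda>r. g' r + g a * delta a r) \<in> K" using K by (auto simp: is_ideal_def)
    moreover have "(\<lambda>r. g' r + g a * delta a r) = g" by (auto simp: g'_def delta_def)
    ultimately show ?case by simp
  qed
  have "finite {p. f p \<noteq> 0}" "{p. f p \<noteq> 0} \<subseteq> Y" using f by (auto simp: path_span_def kQ_def)
  then show "f \<in> K" using support by blast
qed

lemma path_prod_Paths:
  "X \<subseteq> Paths n ori \<Longrightarrow> Y \<subseteq> Paths n ori \<Longrightarrow> path_prod n ori X Y \<subseteq> Paths n ori"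
  using pmul_subpath(3) unfolding path_prod_def by blast

lemma upward_closed_path_prod:
  assumes X: "X \<subseteq> Paths n ori" "upward_closed n ori X"
    and Y: "Y \<subseteq> Paths n ori" "upward_closed n ori Y"
  shows "upward_closed n ori (path_prod n ori X Y)"
  unfolding upward_closed_def
proof (intro ballI allI impI)
  fix r s assume "r \<in> path_prod n ori X Y" and rs: "subpath n ori r s"
  then obtain p q where pq: "p \<in> X" "q \<in> Y" "pend n ori q = fst p" "r = (fst q, snd q @ snd p)"
    unfolding path_prod_def by (auto simp: pmul_Some)
  have p: "p \<in> Paths n ori" and q: "q \<in> Paths n ori" using pq X Y by auto
  obtain \<alpha> \<beta> where ab: "\<alpha> \<in> Paths n ori" "\<beta> \<in> Paths n ori" "pend n ori \<beta> = fst r"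
    "pend n ori r = fst \<alpha>" "s = (fst \<beta>, snd \<beta> @ snd r @ snd \<alpha>)"
    using rs unfolding subpath_iff by blast
  define q' where "q' = (fst \<beta>, snd \<beta> @ snd q)"
  define p' where "p' = (fst p, snd p @ snd \<alpha>)"
  have "pend n ori r = pend n ori p" using Paths_concat[OF q p pq(3)] pq(4) by simp
  have "subpath n ori p p'" unfolding subpath_iff
    by (rule bexI[OF _ ab(1)], rule bexI[OF _ trivial_path_Paths[OF fst_less[OF p]]])
      (use ab(4) \<open>pend n ori r = pend n ori p\<close> in \<open>auto simp: p'_def\<close>)
  moreover have "subpath n ori q q'" unfolding subpath_iff
    by (rule bexI[OF _ trivial_path_Paths[OF pend_less[OF q]]], rule bexI[OF _ ab(2)])
      (use ab(3) pq in \<open>auto simp: q'_def\<close>)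
  ultimately have "p' \<in> X" "q' \<in> Y" using X(2) Y(2) pq(1,2) unfolding upward_closed_def by blast+
  moreover have "pmul n ori p' q' = Some s"
    using pq ab by (simp add: pmul_Some p'_def q'_def pend_def wend_append)
  ultimately show "s \<in> path_prod n ori X Y" unfolding path_prod_def by blast
qed

lemma ideal_prod_path_span:
  assumes X: "X \<subseteq> Paths n ori" and Y: "Y \<subseteq> Paths n ori"
    and up: "upward_closed n ori (path_prod n ori X Y)"
  shows "ideal_prod n ori (path_span n ori X) (path_span n ori Y)
    = (path_span n ori (path_prod n ori X Y) :: (path \<Rightarrow> 'k::field) set)"
proof
  have "conv n ori f g \<in> path_span n ori (path_prod n ori X Y)"
    if f: "f \<in> path_span n ori X" and g: "g \<in> path_span n ori Y" for f g :: "path \<Rightarrow> 'k"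
  proof -
    have "r \<in> path_prod n ori X Y" if nz: "conv n ori f g r \<noteq> 0" for r
    proof -
      obtain p q where "pmul n ori p q = Some r" "f p \<noteq> 0" "g q \<noteq> 0"
        using nz by (rule conv_nonzero)
      then show ?thesis using f g unfolding path_span_def path_prod_def by blast
    qed
    moreover have "conv n ori f g \<in> kQ n ori" using f g conv_kQ by (auto simp: path_span_def)
    ultimately show ?thesis by (auto simp: path_span_def)
  qed
  then show "ideal_prod n ori (path_span n ori X) (path_span n ori Y)
      \<subseteq> (path_span n ori (path_prod n ori X Y) :: (path \<Rightarrow> 'k) set)"
    unfolding ideal_prod_def using path_span_is_ideal[OF up] by (intro Inter_lower) blast
  have delta_K: "delta r \<in> K"
    if K: "\<forall>f\<in>path_span n ori X. \<forall>g\<in>path_span n ori Y. conv n ori f g \<in> K"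
      and r: "r \<in> path_prod n ori X Y" for K :: "(path \<Rightarrow> 'k) set" and r
  proof -
    obtain p q where pq: "p \<in> X" "q \<in> Y" "pmul n ori p q = Some r"
      using r unfolding path_prod_def by blast
    then have "p \<in> Paths n ori" "q \<in> Paths n ori" using X Y by auto
    then show ?thesis
      using K pq delta_in_path_span conv_delta[of p n ori q r] by metis
  qed
  show "(path_span n ori (path_prod n ori X Y) :: (path \<Rightarrow> 'k) set)
      \<subseteq> ideal_prod n ori (path_span n ori X) (path_span n ori Y)"
    unfolding ideal_prod_def
  proof (rule Inter_greatest)
    fix K :: "(path \<Rightarrow> 'k) set"
    assume "K \<in> {K. is_ideal n ori K
      \<and> (\<forall>f\<in>path_span n ori X. \<forall>g\<in>path_span n ori Y. conv n ori f g \<in> K)}"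
    then show "path_span n ori (path_prod n ori X Y) \<subseteq> K"
      using path_span_subset_ideal[of n ori K] delta_K by blast
  qed
qed

lemma path_prod_source_trivial: "\<mu> \<in> X \<Longrightarrow> (fst \<mu>, []) \<in> Y \<Longrightarrow> \<mu> \<in> path_prod n ori X Y"
  unfolding path_prod_def by (force simp: pmul_Some)

lemma path_prod_target_trivial: "(pend n ori \<mu>, []) \<in> X \<Longrightarrow> \<mu> \<in> Y \<Longrightarrow> \<mu> \<in> path_prod n ori X Y"
  unfolding path_prod_def by (force simp: pmul_Some)

lemma trivial_in_path_prod: "(x, []) \<in> path_prod n ori X Y \<Longrightarrow> (x, []) \<in> X \<and> (x, []) \<in> Y"
  unfolding path_prod_def by (auto simp: pmul_Some prod_eq_iff)

lemma decomposable_path_span_Un: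
  assumes A: "A \<subseteq> Paths n ori" "upward_closed n ori A" "A \<noteq> {}"
    and B: "B \<subseteq> Paths n ori" "upward_closed n ori B" "B \<noteq> {}"
    and disj: "A \<inter> B = {}"
  shows "decomposable n ori (path_span n ori (A \<union> B) :: (path \<Rightarrow> 'k::field) set)"
  unfolding decomposable_def
proof (intro exI conjI)
  let ?A = "path_span n ori A :: (path \<Rightarrow> 'k) set" and ?B = "path_span n ori B :: (path \<Rightarrow> 'k) set"
  show "is_ideal n ori ?A" "is_ideal n ori ?B"
    using path_span_is_ideal A(2) B(2) by blast+
  show "?A \<noteq> {\<lambda>_. 0}" "?B \<noteq> {\<lambda>_. 0}"
    using A B delta_in_path_span[of _ n ori] by (metis delta_def ex_in_conv in_mono one_neq_zero singletonD)+
  have "f = (\<lambda>_. 0)" if "f \<in> ?A" "f \<in> ?B" for f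
    using that disj unfolding path_span_def by blast
  then show "?A \<inter> ?B = {\<lambda>_. 0}"
    by (auto simp: path_span_def kQ_def)
  show "path_span n ori (A \<union> B) = {\<lambda>r. a r + b r |a b. a \<in> ?A \<and> b \<in> ?B}"
  proof (intro equalityI subsetI)
    fix f :: "path \<Rightarrow> 'k" assume f: "f \<in> path_span n ori (A \<union> B)"
    define a where "a r = (if r \<in> A then f r else 0)" for r
    define b where "b r = (if r \<in> A then 0 else f r)" for r
    have "a \<in> ?A" "b \<in> ?B" "f = (\<lambda>r. a r + b r)"
      using f by (auto simp: path_span_def kQ_def a_def b_def elim: rev_finite_subset)
    then show "f \<in> {\<lambda>r. a r + b r |a b. a \<in> ?A \<and> b \<in> ?B}" by blast
  next
    fix h assume "h \<in> {\<lambda>r. a r + b r |a b. a \<in> ?A \<and> b \<in> ?B}"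
    then obtain a b where ab: "a \<in> ?A" "b \<in> ?B" "h = (\<lambda>r. a r + b r)" by blast
    have supp: "{r. h r \<noteq> 0} \<subseteq> {r. a r \<noteq> 0} \<union> {r. b r \<noteq> 0}" using ab(3) by auto
    moreover have "finite ({r. a r \<noteq> 0} \<union> {r. b r \<noteq> 0})"
      using ab(1,2) by (simp add: path_span_def kQ_def)
    ultimately have "finite {r. h r \<noteq> 0}" by (rule finite_subset)
    moreover have "{r. h r \<noteq> 0} \<subseteq> Paths n ori \<inter> (A \<union> B)"
      using supp ab(1,2) unfolding path_span_def kQ_def by blast
    ultimately show "h \<in> path_span n ori (A \<union> B)"
      unfolding path_span_def kQ_def by blast
  qed
qed

text \<open>The paths of XP below some member of M form a superpath-closed part: a superpath of
  such a path lies below another maximal path only through a trivial path of XP, and the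
  closure condition keeps that maximal path in M.\<close>

lemma decomposable_path_span_cut:
  assumes adm: "admissible n ori"
    and XP: "XP \<subseteq> Paths n ori" "upward_closed n ori XP"
    and M: "\<And>\<mu>. \<mu> \<in> M \<Longrightarrow> maximal_path n ori \<mu>"
    and closed: "\<And>x \<mu> \<mu>'. (x, []) \<in> XP \<Longrightarrow> \<mu> \<in> M \<Longrightarrow> \<mu> \<in> ends n ori x \<Longrightarrow> \<mu>' \<in> ends n ori x
      \<Longrightarrow> \<mu>' \<in> M"
    and \<mu>1: "\<mu>1 \<in> M" "\<mu>1 \<in> XP" and \<mu>2: "maximal_path n ori \<mu>2" "\<mu>2 \<notin> M" "\<mu>2 \<in> XP"
  shows "decomposable n ori (path_span n ori XP :: (path \<Rightarrow> 'k::field) set)"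
proof -
  define A where "A = {r \<in> XP. \<exists>\<mu>\<in>M. subpath n ori r \<mu>}"
  have "upward_closed n ori A" unfolding upward_closed_def
  proof (intro ballI allI impI)
    fix r s assume "r \<in> A" and rs: "subpath n ori r s"
    then obtain \<mu> where \<mu>: "\<mu> \<in> M" "subpath n ori r \<mu>" and r: "r \<in> XP" unfolding A_def by blast
    have "s \<in> XP" using XP(2) r rs unfolding upward_closed_def by blast
    obtain \<mu>' where \<mu>': "maximal_path n ori \<mu>'" "subpath n ori s \<mu>'"
      using exists_maximal_superpath[OF adm] \<open>s \<in> XP\<close> XP(1) by blast
    have r\<mu>': "subpath n ori r \<mu>'" using subpath_trans[OF rs \<mu>'(2)] r XP(1) by blast
    have "\<mu>' \<in> M"
    proof (cases "\<mu>' = \<mu>")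
      case False
      then show ?thesis
        using common_subpath_of_maximal_paths[OF M[OF \<mu>(1)] \<mu>'(1) _ \<mu>(2) r\<mu>'] closed r \<mu>(1)
        by metis
    qed (use \<mu> in simp)
    then show "s \<in> A" using \<open>s \<in> XP\<close> \<mu>'(2) unfolding A_def by blast
  qed
  moreover have "upward_closed n ori (XP - A)"
    using XP(1,2) subpath_trans unfolding upward_closed_def A_def by blast
  moreover have "\<mu>1 \<in> A" using \<mu>1 M subpath_refl[OF maximal_path_Paths] unfolding A_def by blast
  moreover have "\<mu>2 \<in> XP - A"
    using \<mu>2 M maximal_path_Paths unfolding A_def maximal_path_def by blast
  moreover have "A \<subseteq> XP" unfolding A_def by blast
  ultimately have "decomposable n ori (path_span n ori (A \<union> (XP - A)) :: (path \<Rightarrow> 'k) set)"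
    using XP(1) decomposable_path_span_Un[of A n ori "XP - A"] by blast
  moreover have "A \<union> (XP - A) = XP" unfolding A_def by blast
  ultimately show ?thesis by simp
qed

section \<open>Chains\<close>

lemma is_chain_finite_card:
  assumes "is_chain V E en"
  shows "finite V" "finite E" "card V = Suc (card E)"
  using assms by (auto simp: is_chain_def distinct_card)

lemma is_chain_vertex_on_edge:
  assumes "is_chain V E en" "2 \<le> card V" "v \<in> V"
  obtains e where "e \<in> E" "v \<in> en e"
proof -
  obtain vs es where ch: "distinct vs" "set vs = V" "set es = E" "length vs = Suc (length es)"
    "\<forall>i<length es. en (es ! i) = {vs ! i, vs ! Suc i}"
    using assms(1) unfolding is_chain_def by blast
  obtain j where j: "j < length vs" "vs ! j = v" using assms(3) ch(2) by (metis in_set_conv_nth)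
  have "es \<noteq> []" using assms(2) ch(1,2,4) distinct_card by fastforce
  show ?thesis
  proof (cases "j < length es")
    case True
    then show ?thesis using that[of "es ! j"] ch(3,5) j by auto
  next
    case False
    then have "j = Suc (length es - 1)" "length es - 1 < length es"
      using j(1) ch(4) \<open>es \<noteq> []\<close> by auto
    then show ?thesis using that[of "es ! (length es - 1)"] ch(3,5) j by (metis insert_iff nth_mem)
  qed
qed

lemma card_nth_preimage:
  assumes "distinct xs"
  shows "card {i. i < length xs \<and> xs ! i \<in> A} = card (set xs \<inter> A)"
proof -
  have "(!) xs ` {i. i < length xs \<and> xs ! i \<in> A} = set xs \<inter> A"
    by (auto simp: in_set_conv_nth)
  moreover have "inj_on ((!) xs) {i. i < length xs \<and> xs ! i \<in> A}"
    using assms by (auto intro: inj_on_subset[OF inj_on_nth])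
  ultimately show ?thesis using card_image by fastforce
qed

lemma exists_gap_between:
  fixes S T :: "nat set"
  assumes "finite S" "finite T" "Suc (card S) < card T"
  obtains a b k where "a \<in> T" "b \<in> T" "a \<le> k" "k < b" "k \<notin> S"
proof -
  have "T \<noteq> {}" using assms(3) by auto
  define a b where "a = Min T" and "b = Max T"
  have ab: "a \<in> T" "b \<in> T" "T \<subseteq> {a..b}"
    using assms(2) \<open>T \<noteq> {}\<close> unfolding a_def b_def by (auto intro: Min_le Max_ge)
  have "\<not> {a..<b} \<subseteq> S"
  proof
    assume "{a..<b} \<subseteq> S"
    then have "b - a \<le> card S" using card_mono[OF assms(1)] by (metis card_atLeastLessThan)
    moreover have "card T \<le> Suc b - a" using card_mono[OF finite_atLeastAtMost ab(3)] by simp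
    ultimately show False using assms(3) by linarith
  qed
  then obtain k where "a \<le> k" "k < b" "k \<notin> S" by (meson atLeastLessThan_iff subsetI)
  then show ?thesis using that[OF ab(1,2)] by blast
qed

text \<open>Since more vertices than edges are shared, some edge between the first and the last
  shared vertex is not shared; cut there.\<close>

lemma is_chain_cut:
  assumes chain: "is_chain V E en" and more: "Suc (card (E \<inter> E')) < card (V \<inter> V')"
  obtains V1 where "V1 \<subseteq> V" "V1 \<inter> V' \<noteq> {}" "(V - V1) \<inter> V' \<noteq> {}"
    "\<And>e. e \<in> E \<inter> E' \<Longrightarrow> en e \<inter> V1 \<noteq> {} \<Longrightarrow> en e \<subseteq> V1"
proof -
  obtain vs es where ch: "distinct vs" "distinct es" "set vs = V" "set es = E"
    "length vs = Suc (length es)" and en: "\<And>i. i < length es \<Longrightarrow> en (es ! i) = {vs ! i, vs ! Suc i}"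
    using chain unfolding is_chain_def by blast
  define S where "S = {i. i < length es \<and> es ! i \<in> E'}"
  define T where "T = {j. j < length vs \<and> vs ! j \<in> V'}"
  have "Suc (card S) < card T"
    using more card_nth_preimage[OF ch(1)] card_nth_preimage[OF ch(2)] ch(3,4)
    by (simp add: S_def T_def)
  then obtain a b k where abk: "a \<in> T" "b \<in> T" "a \<le> k" "k < b" "k \<notin> S"
    by (rule exists_gap_between[rotated 2]) (auto simp: S_def T_def)
  have vs_inj: "vs ! i = vs ! j \<longleftrightarrow> i = j" if "i < length vs" "j < length vs" for i j
    using nth_eq_iff_index_eq[OF ch(1) that] .
  define V1 where "V1 = (!) vs ` {..k}"
  show ?thesis
  proof
    show "V1 \<subseteq> V" using abk T_def ch(3) by (auto simp: V1_def)
    show "V1 \<inter> V' \<noteq> {}" using abk by (auto simp: V1_def T_def)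
    have "vs ! b \<notin> V1" using abk vs_inj by (fastforce simp: V1_def T_def)
    then show "(V - V1) \<inter> V' \<noteq> {}" using abk ch(3) by (auto simp: T_def)
  next
    fix e assume e: "e \<in> E \<inter> E'" and meets: "en e \<inter> V1 \<noteq> {}"
    obtain i where i: "i < length es" "es ! i = e" using e ch(4) by (metis IntD1 in_set_conv_nth)
    have "i \<noteq> k" using abk(5) i e by (auto simp: S_def)
    obtain j where "j \<le> k" "vs ! j \<in> {vs ! i, vs ! Suc i}"
      using meets en[OF i(1)] i(2) by (auto simp: V1_def)
    moreover have "j < length vs" using \<open>j \<le> k\<close> abk(2,4) by (auto simp: T_def)
    ultimately have "j = i \<or> j = Suc i" using vs_inj i(1) ch(5) by auto
    then have "Suc i \<le> k" using \<open>j \<le> k\<close> \<open>i \<noteq> k\<close> by auto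
    then show "en e \<subseteq> V1" using en[OF i(1)] i(2) by (auto simp: V1_def)
  qed
qed

lemma card_Int_gt_of_chains:
  assumes "finite A" "finite B" "finite C" "finite D" "card (A \<union> B) \<le> card (C \<union> D)"
    "card A = Suc (card C)" "card B = Suc (card D)"
  shows "Suc (card (C \<inter> D)) < card (A \<inter> B)"
  using assms card_Un_Int[of A B] card_Un_Int[of C D] by simp

section \<open>Products of type II ideals\<close>

lemma GammaIV_path_span:
  "GammaIV n ori (path_span n ori X :: (path \<Rightarrow> 'k::field) set) = {\<mu>. maximal_path n ori \<mu> \<and> \<mu> \<in> X}"
  using delta_in_path_span maximal_path_Paths unfolding GammaIV_def by blast

lemma GammaIE_path_span:
  "GammaIE n ori (path_span n ori X :: (path \<Rightarrow> 'k::field) set)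
    = {x. (is_source n ori x \<or> is_sink n ori x) \<and> (x, []) \<in> X}"
  using delta_in_path_span[OF trivial_path_Paths] unfolding GammaIE_def
  by (auto simp: is_source_def is_sink_def)

lemma GammaIV_Int_subset_path_prod:
  assumes I: "I = path_span n ori XI" and J: "J = path_span n ori XJ"
    and chain: "is_chain (GammaIV n ori J) (GammaIE n ori J) (ends n ori)" "2 \<le> card (GammaIV n ori J)"
    and isolated: "\<forall>\<omega> \<in> GammaIV n ori I \<inter> GammaIV n ori J.
        (\<forall>x \<in> GammaIE n ori I \<inter> GammaIE n ori J. \<omega> \<notin> ends n ori x) \<longrightarrow>
        (\<forall>x \<in> GammaIE n ori J. \<omega> \<in> ends n ori x \<longrightarrow> is_source n ori x)"
  shows "GammaIV n ori I \<inter> GammaIV n ori J \<subseteq> path_prod n ori XI XJ"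
proof
  fix \<omega> assume \<omega>: "\<omega> \<in> GammaIV n ori I \<inter> GammaIV n ori J"
  then have m: "maximal_path n ori \<omega>" and "\<omega> \<in> XI" "\<omega> \<in> XJ"
    using I J GammaIV_path_span by auto
  show "\<omega> \<in> path_prod n ori XI XJ"
  proof (cases "\<exists>x \<in> GammaIE n ori I \<inter> GammaIE n ori J. \<omega> \<in> ends n ori x")
    case True
    then obtain x where "(x, []) \<in> XI" "(x, []) \<in> XJ" "fst \<omega> = x \<or> pend n ori \<omega> = x"
      unfolding I J GammaIE_path_span ends_def by blast
    then show ?thesis using path_prod_source_trivial path_prod_target_trivial \<open>\<omega> \<in> XI\<close> \<open>\<omega> \<in> XJ\<close>
      by metis
  next
    case False
    obtain x where x: "x \<in> GammaIE n ori J" "\<omega> \<in> ends n ori x"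
      using is_chain_vertex_on_edge[OF chain] \<omega> by blast
    then have "is_source n ori x" using isolated False \<omega> by blast
    then have "fst \<omega> = x"
      using x(2) maximal_path_ends_at_sink[OF m] source_not_sink by (auto simp: ends_def)
    then show ?thesis using path_prod_source_trivial \<open>\<omega> \<in> XI\<close> x(1) J GammaIE_path_span by blast
  qed
qed

lemma decomposable_ideal_prod_cut:
  fixes I J :: "(path \<Rightarrow> 'k::field) set"
  assumes adm: "admissible n ori"
    and XI: "XI \<subseteq> Paths n ori" "upward_closed n ori XI" "I = path_span n ori XI"
    and XJ: "XJ \<subseteq> Paths n ori" "upward_closed n ori XJ" "J = path_span n ori XJ"
    and common: "GammaIV n ori I \<inter> GammaIV n ori J \<subseteq> path_prod n ori XI XJ"
    and M: "M \<subseteq> GammaIV n ori I" "M \<inter> GammaIV n ori J \<noteq> {}" "(GammaIV n ori I - M) \<inter> GammaIV n ori J \<noteq> {}"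
    and M_closed: "\<And>x. x \<in> GammaIE n ori I \<inter> GammaIE n ori J \<Longrightarrow> ends n ori x \<inter> M \<noteq> {}
      \<Longrightarrow> ends n ori x \<subseteq> M"
  shows "decomposable n ori (ideal_prod n ori I J)"
proof -
  define XP where "XP = path_prod n ori XI XJ"
  have XP: "XP \<subseteq> Paths n ori" "upward_closed n ori XP"
    using path_prod_Paths[OF XI(1) XJ(1)] upward_closed_path_prod[OF XI(1,2) XJ(1,2)]
    unfolding XP_def by simp_all
  have M_max: "maximal_path n ori \<mu>" if "\<mu> \<in> M" for \<mu>
    using that M(1) unfolding XI(3) GammaIV_path_span by blast
  have closed: "\<mu>' \<in> M"
    if x: "(x, []) \<in> XP" and \<mu>: "\<mu> \<in> M" "\<mu> \<in> ends n ori x" and \<mu>': "\<mu>' \<in> ends n ori x"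
    for x \<mu> \<mu>'
  proof -
    have "x \<in> GammaE n ori" using maximal_path_ends_GammaE[OF M_max[OF \<mu>(1)] \<mu>(2)] .
    then have "x \<in> GammaIE n ori I \<inter> GammaIE n ori J"
      using trivial_in_path_prod[OF x[unfolded XP_def]]
      unfolding XI(3) XJ(3) GammaIE_path_span GammaE_def by blast
    then show ?thesis using M_closed \<mu> \<mu>' by blast
  qed
  obtain \<mu>1 where \<mu>1: "\<mu>1 \<in> M" "\<mu>1 \<in> XP"
    using M(1,2) common unfolding XP_def by blast
  obtain \<mu>2 where \<mu>2: "\<mu>2 \<in> GammaIV n ori I" "\<mu>2 \<notin> M" "\<mu>2 \<in> XP"
    using M(3) common unfolding XP_def by blast
  have \<mu>2_max: "maximal_path n ori \<mu>2" using \<mu>2(1) unfolding GammaIV_def by blast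
  have "decomposable n ori (path_span n ori XP :: (path \<Rightarrow> 'k) set)"
    by (rule decomposable_path_span_cut[OF adm XP M_max closed \<mu>1 \<mu>2_max \<mu>2(2,3)])
  moreover have "ideal_prod n ori I J = path_span n ori XP"
    unfolding XI(3) XJ(3) XP_def by (rule ideal_prod_path_span[OF XI(1) XJ(1) XP(2)[unfolded XP_def]])
  ultimately show ?thesis by simp
qed

theorem corollary26:
  fixes n :: nat and ori :: "nat \<Rightarrow> bool" and I J :: "(path \<Rightarrow> 'k::field) set"
  assumes alg_closed: "\<forall>p :: 'k poly. 0 < degree p \<longrightarrow> (\<exists>x. poly p x = 0)"
    and adm: "admissible n ori"
    and linI: "lin_semigroup_ideal n ori I" and linJ: "lin_semigroup_ideal n ori J"
    and indI: "indecomposable n ori I" and indJ: "indecomposable n ori J"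
    and IIa: "type_II n ori I" and IIb: "type_II n ori J"
    and unionV: "GammaIV n ori I \<union> GammaIV n ori J = GammaV n ori"
    and unionE: "GammaIE n ori I \<union> GammaIE n ori J = GammaE n ori"
    and isolated: "\<forall>\<omega> \<in> GammaIV n ori I \<inter> GammaIV n ori J.
        (\<forall>x \<in> GammaIE n ori I \<inter> GammaIE n ori J. \<omega> \<notin> ends n ori x) \<longrightarrow>
        (\<forall>x \<in> GammaIE n ori J. \<omega> \<in> ends n ori x \<longrightarrow> is_source n ori x)"
  shows "decomposable n ori (ideal_prod n ori I J)"
proof -
  obtain XI where XI: "XI \<subseteq> Paths n ori" "upward_closed n ori XI" "I = path_span n ori XI"
    using lin_semigroup_ideal_path_span[OF linI] by blast
  obtain XJ where XJ: "XJ \<subseteq> Paths n ori" "upward_closed n ori XJ" "J = path_span n ori XJ"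
    using lin_semigroup_ideal_path_span[OF linJ] by blast
  have chains: "is_chain (GammaIV n ori I) (GammaIE n ori I) (ends n ori)"
      "is_chain (GammaIV n ori J) (GammaIE n ori J) (ends n ori)" "2 \<le> card (GammaIV n ori J)"
    using IIa IIb unfolding type_II_def by simp_all
  note fin = is_chain_finite_card[OF chains(1)] is_chain_finite_card[OF chains(2)]
  have "card (GammaV n ori) \<le> card (GammaE n ori)"
    by (rule card_GammaV_le_card_GammaE) (simp add: unionE[symmetric] fin)
  then have "Suc (card (GammaIE n ori I \<inter> GammaIE n ori J)) < card (GammaIV n ori I \<inter> GammaIV n ori J)"
    by (intro card_Int_gt_of_chains) (simp_all add: fin unionV unionE)
  then obtain M where M: "M \<subseteq> GammaIV n ori I" "M \<inter> GammaIV n ori J \<noteq> {}"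
      "(GammaIV n ori I - M) \<inter> GammaIV n ori J \<noteq> {}"
      "\<And>x. x \<in> GammaIE n ori I \<inter> GammaIE n ori J \<Longrightarrow> ends n ori x \<inter> M \<noteq> {} \<Longrightarrow> ends n ori x \<subseteq> M"
    by (rule is_chain_cut[OF chains(1)]) blast
  have "GammaIV n ori I \<inter> GammaIV n ori J \<subseteq> path_prod n ori XI XJ"
    by (rule GammaIV_Int_subset_path_prod[OF XI(3) XJ(3) chains(2,3) isolated])
  then show ?thesis by (rule decomposable_ideal_prod_cut[OF adm XI XJ _ M])
qed

end
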